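(* Let $C$ and $D$ be reflexive symmetric cycles of lengths $m$ and $n$ respectively, with $4 \leq n \leq m$. For an integer $w$, let $\mathrm{Hom}_w(C,D)$ be the subgraph of $\mathrm{Hom}(C,D)$ induced by the homomorphisms of wind $w$. Then $\mathrm{Hom}_w(C,D)$ consists of (1) a single component if $0 \leq |w| < m/n$; (2) $n$ isolated vertices if $0 < |w| = m/n$; and $\mathrm{Hom}_w(C,D)$ is empty if $m/n < |w|$.
   Context: A digraph is a binary relation $\to$ on a finite vertex set; $uv$ is an arc if $u \to v$, the arc $uu$ is a loop, and a digraph is reflexive if every vertex has a loop. A cycle of length $m\ge 3$ is written $C = c_0c_1\dots c_{m-1}c_0$ (indices mod $m$), its edges being the pairs $c_ic_{i+1}$; it is symmetric if $c_i \to c_{i+1}$ and $c_{i+1}\to c_i$ for every $i$. The cycle $D$ of length $n$ is written $D=(0)(1)\dots(n-1)(0)$, its vertices being the integers mod $n$. A homomorphism $\phi: C \to D$ is a map on vertices with $u \to v$ implying $\phi(u)\to\phi(v)$. $\mathrm{Hom}(C,D)$ is the digraph whose vertices are the homomorphisms $C\to D$, with $\phi \to \phi'$ iff for all $u \to v$ in $C$, $\phi(u) \to \phi'(v)$; components are components of its underlying graph (two maps adjacent if $\phi\to\phi'$ or $\phi'\to\phi$). Under $\phi$, the edge $c_ic_{i+1}$ is increasing, stationary or decreasing according as $\phi(c_{i+1}) - \phi(c_i)$ is $1$, $0$ or $-1$ (mod $n$). The increase of $\phi$ is the number of increasing edges minus the number of decreasing edges, and the wind of $\phi$ is its increase divided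 by $n$. *)

theory Defs
  imports Complex_Main "HOL-Library.FuncSet"
begin

text \<open>The cycle of length k has vertex set {0..<k} (the integers mod k).
  Reflexive symmetric cycle: u is joined to v iff v = u, v = u+1 or u = v+1 (mod k).\<close>
definition cyc_arc :: "nat \<Rightarrow> nat \<Rightarrow> nat \<Rightarrow> bool" where
  "cyc_arc k u v \<longleftrightarrow> v = u \<or> v = (u + 1) mod k \<or> u = (v + 1) mod k"

definition homs :: "nat \<Rightarrow> nat \<Rightarrow> (nat \<Rightarrow> nat) set" where
  "homs m n = {\<phi> \<in> {0..<m} \<rightarrow>\<^sub>E {0..<n}.
      \<forall>u<m. \<forall>v<m. cyc_arc m u v \<longrightarrow> cyc_arc n (\<phi> u) (\<phi> v)}"

definition hom_arc :: "nat \<Rightarrow> nat \<Rightarrow> (nat \<Rightarrow> nat) \<Rightarrow> (nat \<Rightarrow> nat) \<Rightarrow> bool" where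
  "hom_arc m n \<phi> \<psi> \<longleftrightarrow> (\<forall>u<m. \<forall>v<m. cyc_arc m u v \<longrightarrow> cyc_arc n (\<phi> u) (\<psi> v))"

definition edge_step :: "nat \<Rightarrow> nat \<Rightarrow> nat \<Rightarrow> int" where
  "edge_step n a b = (if b = (a + 1) mod n then 1 else if a = (b + 1) mod n then -1 else 0)"

definition increase :: "nat \<Rightarrow> nat \<Rightarrow> (nat \<Rightarrow> nat) \<Rightarrow> int" where
  "increase m n \<phi> = (\<Sum>i<m. edge_step n (\<phi> i) (\<phi> ((i + 1) mod m)))"

definition wind :: "nat \<Rightarrow> nat \<Rightarrow> (nat \<Rightarrow> nat) \<Rightarrow> real" where
  "wind m n \<phi> = real_of_int (increase m n \<phi>) / real n"

definition homs_w :: "nat \<Rightarrow> nat \<Rightarrow> int \<Rightarrow> (nat \<Rightarrow> nat) set" where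
  "homs_w m n w = {\<phi> \<in> homs m n. wind m n \<phi> = real_of_int w}"

definition und_edges :: "'a set \<Rightarrow> ('a \<Rightarrow> 'a \<Rightarrow> bool) \<Rightarrow> ('a \<times> 'a) set" where
  "und_edges V R = {(x, y). x \<in> V \<and> y \<in> V \<and> (R x y \<or> R y x)}"

definition components :: "'a set \<Rightarrow> ('a \<Rightarrow> 'a \<Rightarrow> bool) \<Rightarrow> 'a set set" where
  "components V R = {(und_edges V R)\<^sup>* `` {x} | x. x \<in> V}"

end

theory Submission
  imports Defs
begin

(* Through the coverings Z -> C and Z -> D, a homomorphism C -> D of increase K is the same as
   a walk f : Z -> Z with steps in {-1, 0, 1} and f (i + m) = f i + K, read modulo n; hence
   |K| <= m.  If |K| = m every step is sgn K, so f i = f 0 + sgn K * i and only the n choices of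
   f 0 mod n remain; with n >= 4 two of these maps are adjacent only if they coincide.
   If |K| < m, any two walks f <= g are joined: minimising the tilted height m * f j - K * j over
   the j with f j < g j finds a local minimum of f below g, and raising f by one on the residue
   class of j is an arc of Hom(C, D) that decreases the gap between f and g.  Shifting a walk by a
   multiple of n does not change the map it induces, so any walk can be put above any other. *)

definition wrap :: "nat \<Rightarrow> int \<Rightarrow> nat" where
  "wrap n a = nat (a mod int n)"

lemma int_wrap: "0 < n \<Longrightarrow> int (wrap n a) = a mod int n"
  by (simp add: wrap_def)

lemma wrap_less: "0 < n \<Longrightarrow> wrap n a < n"
  by (simp add: wrap_def nat_less_iff)

lemma wrap_int: "x < n \<Longrightarrow> wrap n (int x) = x"
  by (simp add: wrap_def zmod_int)

lemma wrap_eq_iff: "0 < n \<Longrightarrow> wrap n a = wrap n b \<longleftrightarrow> int n dvd a - b"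
  by (metis int_wrap of_nat_eq_iff mod_eq_dvd_iff)

lemma Suc_wrap_mod: "0 < n \<Longrightarrow> (wrap n a + 1) mod n = wrap n (a + 1)"
proof -
  assume n: "0 < n"
  have "int ((wrap n a + 1) mod n) = (a mod int n + 1) mod int n"
    using n by (simp add: int_wrap of_nat_mod add.commute)
  also have "\<dots> = int (wrap n (a + 1))"
    using n by (simp add: int_wrap mod_add_left_eq)
  finally show ?thesis by simp
qed

lemma abs_le_1_iff: "\<bar>e :: int\<bar> \<le> 1 \<longleftrightarrow> e = -1 \<or> e = 0 \<or> e = 1"
  by auto

lemma cyc_arc_wrap_iff:
  assumes "0 < n"
  shows "cyc_arc n (wrap n a) (wrap n b) \<longleftrightarrow> (\<exists>e. \<bar>e\<bar> \<le> 1 \<and> int n dvd b - a - e)"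
proof -
  have "cyc_arc n (wrap n a) (wrap n b) \<longleftrightarrow>
      int n dvd b - a - 0 \<or> int n dvd b - a - 1 \<or> int n dvd b - a - (-1)"
    unfolding cyc_arc_def Suc_wrap_mod[OF assms] wrap_eq_iff[OF assms]
    by (simp add: dvd_diff_commute algebra_simps)
  also have "\<dots> \<longleftrightarrow> (\<exists>e. \<bar>e\<bar> \<le> 1 \<and> int n dvd b - a - e)"
    by (auto simp: abs_le_1_iff)
  finally show ?thesis .
qed

lemma cyc_arc_wrapI: "0 < n \<Longrightarrow> \<bar>b - a\<bar> \<le> 1 \<Longrightarrow> cyc_arc n (wrap n a) (wrap n b)"
  by (auto simp: cyc_arc_wrap_iff)

lemma edge_step_wrap:
  assumes "3 \<le> n" "\<bar>b - a\<bar> \<le> 1"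
  shows "edge_step n (wrap n a) (wrap n b) = b - a"
proof -
  have n: "0 < n" using assms(1) by simp
  have small: "\<not> int n dvd d" if "d \<noteq> 0" "\<bar>d\<bar> \<le> 2" for d
    using assms(1) that dvd_imp_le_int[of d "int n"] by auto
  have "b - a = -1 \<or> b - a = 0 \<or> b - a = 1" using assms(2) by (simp add: abs_le_1_iff)
  then show ?thesis
    unfolding edge_step_def Suc_wrap_mod[OF n] wrap_eq_iff[OF n]
    using small[of "a - (b + 1)"] small[of "b - (a + 1)"] by (auto simp: algebra_simps)
qed

lemma wrap_add_edge_step:
  assumes "a < n" "b < n" "cyc_arc n a b"
  shows "wrap n (int a + edge_step n a b) = b"
proof -
  have "int b = (int a + edge_step n a b) mod int n"
  proof (cases "b = (a + 1) mod n")
    case True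
    then show ?thesis by (simp add: edge_step_def of_nat_mod add.commute)
  next
    case False
    show ?thesis
    proof (cases "a = (b + 1) mod n")
      case True
      then have "int a = (int b + 1) mod int n" by (simp add: of_nat_mod add.commute)
      then have "(int a - 1) mod int n = int b mod int n" by (simp add: mod_diff_left_eq)
      then show ?thesis using \<open>b \<noteq> (a + 1) mod n\<close> True assms(2) by (simp add: edge_step_def)
    next
      case False
      then show ?thesis using \<open>b \<noteq> (a + 1) mod n\<close> assms by (auto simp: edge_step_def cyc_arc_def)
    qed
  qed
  then show ?thesis by (simp add: wrap_def flip: nat_int)
qed

lemma dvd_of_neighbours_near_zero:
  fixes n x :: int
  assumes "4 \<le> n" and near: "\<And>t. \<bar>t\<bar> \<le> 1 \<Longrightarrow> \<exists>e. \<bar>e\<bar> \<le> 1 \<and> n dvd x + t - e"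
  shows "n dvd x"
proof -
  obtain e0 where e0: "\<bar>e0\<bar> \<le> 1" "n dvd x - e0" using near[of 0] by auto
  show ?thesis
  proof (cases "e0 = 0")
    case True
    with e0 show ?thesis by simp
  next
    case False
    obtain e1 where e1: "\<bar>e1\<bar> \<le> 1" "n dvd x + e0 - e1" using near[OF e0(1)] by blast
    have "n dvd (x + e0 - e1) - (x - e0)" using e1(2) e0(2) by (rule dvd_diff)
    then have "n dvd 2 * e0 - e1" by (simp add: algebra_simps)
    moreover have "2 * e0 - e1 \<noteq> 0" "\<bar>2 * e0 - e1\<bar> < 4" using e0(1) e1(1) False by auto
    ultimately show ?thesis using assms(1) dvd_imp_le_int[of "2 * e0 - e1" n] by linarith
  qed
qed

definition quasi_periodic :: "nat \<Rightarrow> int \<Rightarrow> (int \<Rightarrow> int) \<Rightarrow> bool" where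
  "quasi_periodic m K f \<longleftrightarrow> (\<forall>i. f (i + int m) = f i + K)"

definition walk :: "nat \<Rightarrow> int \<Rightarrow> (int \<Rightarrow> int) \<Rightarrow> bool" where
  "walk m K f \<longleftrightarrow> quasi_periodic m K f \<and> (\<forall>i. \<bar>f (i + 1) - f i\<bar> \<le> 1)"

lemma quasi_periodic_add_mult:
  assumes "quasi_periodic m K f"
  shows "f (i + k * int m) = f i + k * K"
proof (induction k rule: int_induct[where k = 0])
  case (step1 k)
  have "f (i + (k + 1) * int m) = f ((i + k * int m) + int m)" by (simp add: algebra_simps)
  also have "\<dots> = f (i + k * int m) + K" using assms by (simp add: quasi_periodic_def)
  finally show ?case using step1 by (simp add: algebra_simps)
next
  case (step2 k)
  have "f (i + k * int m) = f ((i + (k - 1) * int m) + int m)" by (simp add: algebra_simps)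
  also have "\<dots> = f (i + (k - 1) * int m) + K" using assms by (simp add: quasi_periodic_def)
  finally show ?case using step2 by (simp add: algebra_simps)
qed simp

lemma quasi_periodic_mod:
  assumes "quasi_periodic m K f"
  shows "f (i mod int m) = f i - (i div int m) * K"
  using quasi_periodic_add_mult[OF assms, of "i mod int m" "i div int m"] by simp

lemma quasi_periodic_diff_mod:
  assumes "quasi_periodic m K f"
  shows "f (i + t) - f i = f (i mod int m + t) - f (i mod int m)"
  using quasi_periodic_add_mult[OF assms, of "i mod int m + t" "i div int m"]
    quasi_periodic_mod[OF assms, of i] by (simp add: algebra_simps)

lemma quasi_periodic_sub_mod:
  assumes "quasi_periodic m K f" "quasi_periodic m K g"
  shows "g (i mod int m) - f (i mod int m) = g i - f i"
  using quasi_periodic_mod[OF assms(1)] quasi_periodic_mod[OF assms(2)] by simp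

lemma wrap_quasi_periodic_mod:
  assumes "quasi_periodic m K f" "0 < n" "int n dvd K"
  shows "wrap n (f (i mod int m)) = wrap n (f i)"
  using assms(3) by (simp add: wrap_eq_iff[OF assms(2)] quasi_periodic_mod[OF assms(1)])

lemma walk_lipschitz:
  assumes "walk m K f"
  shows "\<bar>f j - f i\<bar> \<le> \<bar>j - i\<bar>"
proof -
  have up: "\<bar>f (i + int k) - f i\<bar> \<le> int k" for i k
  proof (induction k)
    case (Suc k)
    have "\<bar>f (i + int k + 1) - f (i + int k)\<bar> \<le> 1" using assms by (simp add: walk_def)
    moreover have "i + int (Suc k) = i + int k + 1" by simp
    ultimately show ?case using Suc.IH unfolding abs_le_iff by (simp only:) linarith
  qed simp
  show ?thesis
  proof (cases "i \<le> j")
    case True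
    then show ?thesis using up[of i "nat (j - i)"] by simp
  next
    case False
    then show ?thesis using up[of j "nat (i - j)"] by (simp add: abs_minus_commute)
  qed
qed

lemma walk_of_steps:
  fixes st :: "nat \<Rightarrow> int"
  assumes "0 < m" "\<And>k. \<bar>st k\<bar> \<le> 1"
  obtains f where "walk m (\<Sum>k<m. st k) f"
    and "\<And>r. r \<le> m \<Longrightarrow> f (int r) = a + (\<Sum>k<r. st k)"
proof -
  define K where "K = (\<Sum>k<m. st k)"
  define F where "F r = a + (\<Sum>k<r. st k)" for r
  define f where "f i = F (nat (i mod int m)) + (i div int m) * K" for i
  have qp: "quasi_periodic m K f"
    using assms(1) by (simp add: quasi_periodic_def f_def algebra_simps)
  have on_period: "f (int r) = F r" if "r \<le> m" for r
  proof (cases "r = m")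
    case True
    then show ?thesis using assms(1) by (simp add: f_def F_def K_def)
  next
    case False
    then show ?thesis using that by (simp add: f_def flip: of_nat_mod of_nat_div)
  qed
  have "\<bar>f (i + 1) - f i\<bar> \<le> 1" for i
  proof -
    define r where "r = nat (i mod int m)"
    have r: "int r = i mod int m" "r < m" using assms(1) by (auto simp: r_def nat_less_iff)
    have "f (i + 1) - f i = f (int r + 1) - f (int r)"
      using quasi_periodic_diff_mod[OF qp] r(1) by simp
    also have "\<dots> = st r"
      using on_period[of "Suc r"] on_period[of r] r(2) by (simp add: F_def add.commute)
    finally show ?thesis using assms(2) by simp
  qed
  with qp on_period show thesis by (intro that) (auto simp: walk_def K_def F_def)
qed

definition walk_hom :: "nat \<Rightarrow> nat \<Rightarrow> (int \<Rightarrow> int) \<Rightarrow> nat \<Rightarrow> nat" where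
  "walk_hom m n f = (\<lambda>i\<in>{0..<m}. wrap n (f (int i)))"

lemma cyc_arc_lift:
  assumes "u < m" "v < m" "cyc_arc m u v"
  obtains j where "j mod int m = int v" "\<bar>j - int u\<bar> \<le> 1"
proof -
  consider "v = u" | "v = (u + 1) mod m" | "u = (v + 1) mod m"
    using assms(3) unfolding cyc_arc_def by blast
  then show thesis
  proof cases
    case 1
    then show thesis using assms(2) by (intro that[of "int u"]) (simp_all add: zmod_int)
  next
    case 2
    then show thesis by (intro that[of "int u + 1"]) (simp_all add: of_nat_mod add.commute)
  next
    case 3
    then have "(int u - 1) mod int m = (int v + 1 - 1) mod int m"
      by (simp add: of_nat_mod add.commute mod_diff_left_eq)
    then show thesis using assms(2) by (intro that[of "int u - 1"]) (simp_all add: zmod_int)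
  qed
qed

lemma hom_arc_walk_hom:
  assumes "walk m K g" "0 < n" "int n dvd K"
    and close: "\<And>i j. \<bar>j - i\<bar> \<le> 1 \<Longrightarrow> \<bar>g j - f i\<bar> \<le> 1"
  shows "hom_arc m n (walk_hom m n f) (walk_hom m n g)"
  unfolding hom_arc_def
proof (intro allI impI)
  fix u v assume uv: "u < m" "v < m" "cyc_arc m u v"
  then obtain j where j: "j mod int m = int v" "\<bar>j - int u\<bar> \<le> 1" by (rule cyc_arc_lift)
  have "walk_hom m n g v = wrap n (g j)"
    using uv(2) wrap_quasi_periodic_mod[of m K g n j] assms(1-3) j(1)
    by (simp add: walk_hom_def walk_def)
  moreover have "walk_hom m n f u = wrap n (f (int u))" using uv(1) by (simp add: walk_hom_def)
  ultimately show "cyc_arc n (walk_hom m n f u) (walk_hom m n g v)"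
    using cyc_arc_wrapI[OF assms(2) close[OF j(2)]] by simp
qed

lemma increase_walk_hom:
  assumes "walk m K f" "3 \<le> n" "int n dvd K"
  shows "increase m n (walk_hom m n f) = K"
proof -
  have qp: "quasi_periodic m K f" and step: "\<And>i. \<bar>f (i + 1) - f i\<bar> \<le> 1"
    using assms(1) by (simp_all add: walk_def)
  have n: "0 < n" using assms(2) by simp
  have "increase m n (walk_hom m n f) = (\<Sum>i<m. f (int (Suc i)) - f (int i))"
    unfolding increase_def
  proof (rule sum.cong)
    fix i assume "i \<in> {..<m}"
    then have "walk_hom m n f ((i + 1) mod m) = wrap n (f (int i + 1))"
      using wrap_quasi_periodic_mod[OF qp n assms(3), of "int i + 1"]
      by (simp add: walk_hom_def of_nat_mod add.commute)
    with \<open>i \<in> {..<m}\<close> show "edge_step n (walk_hom m n f i) (walk_hom m n f ((i + 1) mod m))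
        = f (int (Suc i)) - f (int i)"
      using edge_step_wrap[OF assms(2) step[of "int i"]] by (simp add: walk_hom_def add.commute)
  qed simp
  also have "\<dots> = f (int m) - f 0" using sum_lessThan_telescope[of "\<lambda>i. f (int i)" m] by simp
  also have "\<dots> = K" using qp[unfolded quasi_periodic_def, rule_format, of 0] by simp
  finally show ?thesis .
qed

lemma homs_iff_hom_arc_self:
  "\<phi> \<in> homs m n \<longleftrightarrow> \<phi> \<in> {0..<m} \<rightarrow>\<^sub>E {0..<n} \<and> hom_arc m n \<phi> \<phi>"
  by (simp add: homs_def hom_arc_def)

lemma wind_eq_iff: "0 < n \<Longrightarrow> wind m n \<phi> = real_of_int w \<longleftrightarrow> increase m n \<phi> = w * int n"
  unfolding wind_def by (simp add: divide_eq_eq) (metis of_int_eq_iff of_int_mult of_int_of_nat_eq)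

lemma walk_hom_in_homs_w:
  assumes "walk m (w * int n) f" "3 \<le> n"
  shows "walk_hom m n f \<in> homs_w m n w"
proof -
  have n: "0 < n" using assms(2) by simp
  have "hom_arc m n (walk_hom m n f) (walk_hom m n f)"
    by (rule hom_arc_walk_hom[OF assms(1) n])
      (simp, meson order_trans walk_lipschitz[OF assms(1)])
  moreover have "walk_hom m n f \<in> {0..<m} \<rightarrow>\<^sub>E {0..<n}"
    using wrap_less[OF n] by (simp add: walk_hom_def)
  ultimately show ?thesis
    using increase_walk_hom[OF assms(1,2)] n
    by (simp add: homs_w_def homs_iff_hom_arc_self wind_eq_iff)
qed

lemma homs_lift:
  assumes "\<phi> \<in> homs m n" "0 < m"
  obtains f where "walk m (increase m n \<phi>) f" "walk_hom m n f = \<phi>"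
proof -
  define st where "st k = edge_step n (\<phi> k) (\<phi> ((k + 1) mod m))" for k
  have st: "\<bar>st k\<bar> \<le> 1" for k by (simp add: st_def edge_step_def)
  obtain f where f: "walk m (\<Sum>k<m. st k) f"
    and f_sums: "\<And>r. r \<le> m \<Longrightarrow> f (int r) = int (\<phi> 0) + (\<Sum>k<r. st k)"
    using walk_of_steps[where st = st and a = "int (\<phi> 0)", OF assms(2) st] by blast
  have range: "\<phi> k < n" if "k < m" for k using assms(1) that by (auto simp: homs_def)
  have n: "0 < n" using range[OF assms(2)] by simp
  have hom: "cyc_arc n (\<phi> u) (\<phi> v)" if "u < m" "v < m" "cyc_arc m u v" for u v
    using assms(1) that by (simp add: homs_def)
  have f_mod: "f (int r) mod int n = int (\<phi> r)" if "r < m" for r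
    using that
  proof (induction r)
    case 0
    then show ?case using f_sums[of 0] range[of 0] by (simp add: zmod_int)
  next
    case (Suc r)
    have arc: "cyc_arc n (\<phi> r) (\<phi> ((r + 1) mod m))"
      using hom[of r "(r + 1) mod m"] Suc.prems by (simp add: cyc_arc_def)
    have "f (int (Suc r)) mod int n = (f (int r) + st r) mod int n"
      using f_sums[of "Suc r"] f_sums[of r] Suc.prems by (simp add: add.assoc)
    also have "\<dots> = (int (\<phi> r) + st r) mod int n"
      using Suc by (metis Suc_lessD mod_add_left_eq)
    also have "\<dots> = int (\<phi> (Suc r))"
      using wrap_add_edge_step[OF range range arc] Suc.prems
        int_wrap[OF n, of "int (\<phi> r) + st r"] by (simp add: st_def)
    finally show ?case .
  qed
  have ext: "\<phi> \<in> {0..<m} \<rightarrow>\<^sub>E {0..<n}" using assms(1) by (simp add: homs_def)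
  have "walk_hom m n f = \<phi>"
  proof
    fix r
    show "walk_hom m n f r = \<phi> r"
    proof (cases "r < m")
      case True
      then show ?thesis using f_mod[OF True] by (simp add: walk_hom_def wrap_def)
    next
      case False
      then show ?thesis using PiE_arb[OF ext, of r] by (simp add: walk_hom_def)
    qed
  qed
  with f show thesis by (intro that) (simp_all add: increase_def st_def)
qed

lemma homs_w_eq_walk_homs:
  assumes "3 \<le> n" "0 < m"
  shows "homs_w m n w = walk_hom m n ` {f. walk m (w * int n) f}"
proof
  show "homs_w m n w \<subseteq> walk_hom m n ` {f. walk m (w * int n) f}"
  proof
    fix \<phi> assume "\<phi> \<in> homs_w m n w"
    then have "\<phi> \<in> homs m n" "increase m n \<phi> = w * int n"
      using assms(1) by (simp_all add: homs_w_def wind_eq_iff)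
    then obtain f where "walk m (w * int n) f" "walk_hom m n f = \<phi>"
      using homs_lift[OF _ assms(2)] by metis
    then show "\<phi> \<in> walk_hom m n ` {f. walk m (w * int n) f}" by blast
  qed
  show "walk_hom m n ` {f. walk m (w * int n) f} \<subseteq> homs_w m n w"
    using walk_hom_in_homs_w[OF _ assms(1)] by blast
qed

definition raise :: "nat \<Rightarrow> int \<Rightarrow> (int \<Rightarrow> int) \<Rightarrow> int \<Rightarrow> int" where
  "raise m j f i = (if i mod int m = j mod int m then f i + 1 else f i)"

lemma quasi_periodic_diff_cong:
  assumes "quasi_periodic m K f" "i mod int m = j mod int m"
  shows "f (i + t) - f i = f (j + t) - f j"
  using quasi_periodic_diff_mod[OF assms(1), of i t] quasi_periodic_diff_mod[OF assms(1), of j t]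
    assms(2) by simp

lemma walk_raise:
  assumes f: "walk m K f" and m: "2 \<le> m" and min: "f j \<le> f (j - 1)" "f j \<le> f (j + 1)"
  shows "walk m K (raise m j f)"
    and "\<bar>i' - i\<bar> \<le> 1 \<Longrightarrow> \<bar>raise m j f i' - f i\<bar> \<le> 1"
proof -
  have qp: "quasi_periodic m K f" and step: "\<And>i. \<bar>f (i + 1) - f i\<bar> \<le> 1"
    using f by (simp_all add: walk_def)
  have class_min: "f i \<le> f i'" if "i mod int m = j mod int m" "\<bar>i' - i\<bar> \<le> 1" for i i'
  proof -
    have "i' = i + (i' - i)" by simp
    then have "f i' - f i = f (j + (i' - i)) - f j"
      using quasi_periodic_diff_cong[OF qp that(1), of "i' - i"] by simp
    moreover have "f j \<le> f (j + (i' - i))" using min that(2) by (auto simp: abs_le_1_iff)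
    ultimately show ?thesis by simp
  qed
  have apart: "(i + 1) mod int m \<noteq> i mod int m" for i
    using m by (simp add: mod_eq_dvd_iff zdvd_not_zless)
  show "\<bar>raise m j f i' - f i\<bar> \<le> 1" if "\<bar>i' - i\<bar> \<le> 1" for i i'
    using class_min[of i' i] walk_lipschitz[OF f, of i' i] that
    by (auto simp: raise_def abs_minus_commute)
  have "quasi_periodic m K (raise m j f)"
    using qp by (simp add: quasi_periodic_def raise_def)
  moreover have "\<bar>raise m j f (i + 1) - raise m j f i\<bar> \<le> 1" for i
    using class_min[of i "i + 1"] class_min[of "i + 1" i] step[of i] apart[of i]
    by (auto simp: raise_def)
  ultimately show "walk m K (raise m j f)" by (simp add: walk_def)
qed

definition gap :: "nat \<Rightarrow> (int \<Rightarrow> int) \<Rightarrow> (int \<Rightarrow> int) \<Rightarrow> int" where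
  "gap m f g = (\<Sum>i<m. g (int i) - f (int i))"

lemma gap_raise:
  assumes "0 \<le> j" "j < int m"
  shows "gap m (raise m j f) g = gap m f g - 1"
proof -
  have "gap m (raise m j f) g = (\<Sum>i<m. (g (int i) - f (int i)) - (if i = nat j then 1 else 0))"
    unfolding gap_def using assms by (intro sum.cong) (auto simp: raise_def zmod_int)
  also have "\<dots> = gap m f g - 1"
    using assms by (simp add: gap_def sum_subtractf)
  finally show ?thesis .
qed

lemma walk_local_min_below:
  assumes f: "walk m K f" and g: "walk m K g" and K: "\<bar>K\<bar> < int m" and "f i < g i"
  obtains j where "0 \<le> j" "j < int m" "f j < g j" "f j \<le> f (j - 1)" "f j \<le> f (j + 1)"
proof -
  have qpf: "quasi_periodic m K f" and qpg: "quasi_periodic m K g"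
    using f g by (simp_all add: walk_def)
  have m: "0 < m" using K by simp
  define D where "D = {j \<in> {0..<int m}. f j < g j}"
  (* m-periodic; since |K| < m, a neighbour j + t below g with f (j + t) < f j has smaller h *)
  define h where "h j = int m * f j - K * j" for j
  have h_mod: "h (j mod int m) = h j" for j
  proof -
    have "K * j = K * (j mod int m) + K * (j div int m) * int m"
      by (metis mod_div_mult_eq distrib_left mult.assoc)
    then show ?thesis unfolding h_def quasi_periodic_mod[OF qpf] by (simp add: algebra_simps)
  qed
  have D_mod: "j mod int m \<in> D" if "f j < g j" for j
    using that m quasi_periodic_sub_mod[OF qpf qpg, of j] by (simp add: D_def)
  have "finite D" unfolding D_def by (rule finite_subset[OF _ finite_atLeastLessThan_int]) auto
  moreover have "D \<noteq> {}" using D_mod[OF \<open>f i < g i\<close>] by blast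
  ultimately obtain j where "is_arg_min h (\<lambda>j. j \<in> D) j"
    using ex_is_arg_min_if_finite[of D h] by blast
  then have j: "j \<in> D" and j_min: "\<And>j'. j' \<in> D \<Longrightarrow> h j \<le> h j'"
    by (simp_all add: is_arg_min_linorder)
  have "f j \<le> f (j + t)" if t: "\<bar>t\<bar> = 1" for t
  proof (cases "f (j + t) < g (j + t)")
    case True
    have "h j \<le> h (j + t)" using j_min[OF D_mod[OF True]] h_mod by simp
    then have "t * K \<le> int m * (f (j + t) - f j)" by (simp add: h_def algebra_simps)
    moreover have "\<bar>t * K\<bar> < int m" using t K by (simp add: abs_mult)
    ultimately have "int m * (-1) < int m * (f (j + t) - f j)" by linarith
    then have "-1 < f (j + t) - f j" using m mult_less_cancel_left_pos[of "int m" "-1"] by simp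
    then show ?thesis by simp
  next
    case False
    then show ?thesis
      using walk_lipschitz[OF g, of "j + t" j] j t by (auto simp: D_def abs_le_iff)
  qed
  from this[of "-1"] this[of 1] j show thesis by (intro that) (auto simp: D_def)
qed

lemma walk_hom_rtrancl_below:
  assumes "3 \<le> n" "2 \<le> m" "\<bar>w\<bar> * int n < int m"
    and "walk m (w * int n) f" "walk m (w * int n) g" "\<And>i. f i \<le> g i"
  shows "(walk_hom m n f, walk_hom m n g) \<in> (und_edges (homs_w m n w) (hom_arc m n))\<^sup>*"
  using assms(4,6)
proof (induction "nat (gap m f g)" arbitrary: f rule: less_induct)
  case less
  note f = less.prems(1) and below = less.prems(2)
  show ?case
  proof (cases "\<exists>i. f i < g i")
    case False
    with below have "f = g" by (meson antisym not_less ext)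
    then show ?thesis by simp
  next
    case True
    then obtain j where j: "0 \<le> j" "j < int m" "f j < g j"
      and min: "f j \<le> f (j - 1)" "f j \<le> f (j + 1)"
      using walk_local_min_below[OF f assms(5)] assms(3) by (auto simp: abs_mult)
    define f' where "f' = raise m j f"
    have f': "walk m (w * int n) f'" using walk_raise(1)[OF f assms(2) min] by (simp add: f'_def)
    have below': "f' i \<le> g i" for i
    proof (cases "i mod int m = j mod int m")
      case True
      have "quasi_periodic m (w * int n) f" "quasi_periodic m (w * int n) g"
        using f assms(5) by (simp_all add: walk_def)
      then have "g i - f i = g j - f j" using quasi_periodic_sub_mod True by metis
      then show ?thesis using j(3) True by (simp add: f'_def raise_def)
    next
      case False
      then show ?thesis using below[of i] by (simp add: f'_def raise_def)
    qed
    have "0 \<le> gap m f' g" unfolding gap_def using below' by (simp add: sum_nonneg)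
    then have less_gap: "nat (gap m f' g) < nat (gap m f g)"
      using gap_raise[OF j(1,2)] by (simp add: f'_def)
    have "(walk_hom m n f, walk_hom m n f') \<in> und_edges (homs_w m n w) (hom_arc m n)"
    proof -
      have "0 < n" using assms(1) by simp
      then have "hom_arc m n (walk_hom m n f) (walk_hom m n f')"
        by (rule hom_arc_walk_hom[OF f' _ dvd_triv_right])
          (simp add: f'_def walk_raise(2)[OF f assms(2) min])
      then show ?thesis
        using walk_hom_in_homs_w[OF f assms(1)] walk_hom_in_homs_w[OF f' assms(1)]
        by (simp add: und_edges_def)
    qed
    moreover have "(walk_hom m n f', walk_hom m n g) \<in> (und_edges (homs_w m n w) (hom_arc m n))\<^sup>*"
      using less.hyps f' below' less_gap by blast
    ultimately show ?thesis by (rule converse_rtrancl_into_rtrancl)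
  qed
qed

lemma homs_w_rtrancl:
  assumes "3 \<le> n" "2 \<le> m" "\<bar>w\<bar> * int n < int m" "\<phi> \<in> homs_w m n w" "\<psi> \<in> homs_w m n w"
  shows "(\<phi>, \<psi>) \<in> (und_edges (homs_w m n w) (hom_arc m n))\<^sup>*"
proof -
  have m: "0 < m" using assms(2) by simp
  obtain f g where f: "walk m (w * int n) f" "walk_hom m n f = \<phi>"
    and g: "walk m (w * int n) g" "walk_hom m n g = \<psi>"
    using assms(4,5) homs_w_eq_walk_homs[OF assms(1) m] by auto
  define B where "B = (\<Sum>k<m. \<bar>f (int k) - g (int k)\<bar>)"
  have B: "0 \<le> B" unfolding B_def by (rule sum_nonneg) simp
  define g' where "g' i = g i + int n * B" for i
  have "walk m (w * int n) g'" using g(1) by (simp add: g'_def walk_def quasi_periodic_def)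
  moreover have "walk_hom m n g' = \<psi>"
    using g(2) assms(1) by (auto simp: g'_def walk_hom_def wrap_eq_iff)
  moreover have "f i \<le> g' i" for i
  proof -
    have "f i - g i = f (i mod int m) - g (i mod int m)"
      using quasi_periodic_sub_mod[of m "w * int n" g f i] f(1) g(1) by (simp add: walk_def)
    also have "\<dots> \<le> B"
      unfolding B_def
      using m member_le_sum[of "nat (i mod int m)" "{..<m}" "\<lambda>k. \<bar>f (int k) - g (int k)\<bar>"]
      by (simp add: nat_less_iff)
    also have "B \<le> int n * B" using B assms(1) by (simp add: mult_le_cancel_right1)
    finally show ?thesis by (simp add: g'_def)
  qed
  ultimately show ?thesis using walk_hom_rtrancl_below[OF assms(1-3) f(1)] f(2) by blast
qed

lemma card_components_eq_1:
  assumes "S \<noteq> {}" "\<And>x y. x \<in> S \<Longrightarrow> y \<in> S \<Longrightarrow> (x, y) \<in> (und_edges S R)\<^sup>*"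
  shows "card (components S R) = 1"
proof -
  have "(und_edges S R)\<^sup>* `` {x} = S" if "x \<in> S" for x
  proof
    show "(und_edges S R)\<^sup>* `` {x} \<subseteq> S"
    proof
      fix y assume "y \<in> (und_edges S R)\<^sup>* `` {x}"
      then have "(x, y) \<in> (und_edges S R)\<^sup>*" by simp
      then show "y \<in> S" by induction (use that in \<open>auto simp: und_edges_def\<close>)
    qed
    show "S \<subseteq> (und_edges S R)\<^sup>* `` {x}" using assms(2) that by auto
  qed
  then have "components S R = {S}" using assms(1) by (auto simp: components_def)
  then show ?thesis by simp
qed

lemma walk_floor_line:
  assumes "0 < m" "\<bar>K\<bar> \<le> int m"
  shows "walk m K (\<lambda>i. i * K div int m)"
  unfolding walk_def quasi_periodic_def
proof (intro conjI allI)
  fix i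
  show "(i + int m) * K div int m = i * K div int m + K"
    using assms(1) by (simp add: algebra_simps)
  let ?q = "\<lambda>i. i * K div int m"
  have floor: "int m * (a div int m) \<le> a \<and> a < int m * (a div int m) + int m" for a
  proof -
    have "a = int m * (a div int m) + a mod int m" by simp
    moreover have "0 \<le> a mod int m" "a mod int m < int m" using assms(1) by simp_all
    ultimately show ?thesis by linarith
  qed
  have "(i + 1) * K = i * K + K" by (simp add: algebra_simps)
  then have "int m * ?q i \<le> i * K" "i * K < int m * ?q i + int m"
    "int m * ?q (i + 1) \<le> i * K + K" "i * K + K < int m * ?q (i + 1) + int m"
    using floor[of "i * K"] floor[of "(i + 1) * K"] by simp_all
  then have "int m * (?q (i + 1) - ?q i) < int m * 2" "int m * (-2) < int m * (?q (i + 1) - ?q i)"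
    using assms(2) by (simp_all add: algebra_simps)
  then show "\<bar>?q (i + 1) - ?q i\<bar> \<le> 1"
    using assms(1) by (simp only: mult_less_cancel_left_pos of_nat_0_less_iff)
qed

lemma homs_w_nonempty:
  assumes "3 \<le> n" "0 < m" "\<bar>w\<bar> * int n \<le> int m"
  shows "homs_w m n w \<noteq> {}"
proof -
  have "\<bar>w * int n\<bar> \<le> int m" using assms(3) by (simp add: abs_mult)
  then show ?thesis using walk_hom_in_homs_w[OF walk_floor_line[OF assms(2)] assms(1)] by blast
qed

lemma abs_increase_le: "\<bar>increase m n \<phi>\<bar> \<le> int m"
proof -
  have "\<bar>increase m n \<phi>\<bar> \<le> (\<Sum>i<m. \<bar>edge_step n (\<phi> i) (\<phi> ((i + 1) mod m))\<bar>)"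
    unfolding increase_def by (rule sum_abs)
  also have "\<dots> \<le> (\<Sum>i<m. 1)" by (intro sum_mono) (simp add: edge_step_def)
  finally show ?thesis by simp
qed

lemma homs_w_empty:
  assumes "0 < n" "int m < \<bar>w\<bar> * int n"
  shows "homs_w m n w = {}"
proof -
  have "increase m n \<phi> \<noteq> w * int n" for \<phi>
    using abs_increase_le[of m n \<phi>] assms(2) by (auto simp: abs_mult)
  then show ?thesis using assms(1) by (auto simp: homs_w_def wind_eq_iff)
qed

lemma walk_linear:
  assumes "walk m K f" "\<bar>K\<bar> = int m" "0 \<le> i" "i \<le> int m"
  shows "f i = f 0 + sgn K * i"
proof -
  have "\<bar>f i - f 0\<bar> \<le> i" "\<bar>f (int m) - f i\<bar> \<le> int m - i"
    using walk_lipschitz[OF assms(1), of i 0] walk_lipschitz[OF assms(1), of "int m" i] assms(3,4)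
    by simp_all
  moreover have "f (int m) = f 0 + K"
    using assms(1) quasi_periodic_add_mult[of m K f 0 1] by (simp add: walk_def)
  ultimately show ?thesis using assms(2) by (cases "0 < K") (auto simp: abs_le_iff sgn_if)
qed

lemma homs_w_rigid:
  assumes "3 \<le> n" "0 < m" "\<bar>w\<bar> * int n = int m"
  shows "homs_w m n w = (\<lambda>c. walk_hom m n (\<lambda>i. int c + sgn w * i)) ` {0..<n}"
proof (intro equalityI subsetI)
  have n: "0 < n" using assms(1) by simp
  fix \<phi> assume "\<phi> \<in> homs_w m n w"
  then obtain f where f: "walk m (w * int n) f" "\<phi> = walk_hom m n f"
    using homs_w_eq_walk_homs[OF assms(1,2)] by auto
  define c where "c = wrap n (f 0)"
  have "walk_hom m n f = walk_hom m n (\<lambda>i. int c + sgn w * i)"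
    unfolding walk_hom_def
  proof (rule restrict_ext)
    fix i assume "i \<in> {0..<m}"
    moreover have "\<bar>w * int n\<bar> = int m" "sgn (w * int n) = sgn w"
      using assms(3) n by (simp_all add: abs_mult sgn_mult)
    ultimately have "f (int i) = f 0 + sgn w * int i"
      using walk_linear[OF f(1), of "int i"] by simp
    then show "wrap n (f (int i)) = wrap n (int c + sgn w * int i)"
      by (simp add: c_def wrap_eq_iff[OF n] int_wrap[OF n] minus_mod_eq_mult_div)
  qed
  then show "\<phi> \<in> (\<lambda>c. walk_hom m n (\<lambda>i. int c + sgn w * i)) ` {0..<n}"
    using f(2) wrap_less[OF n] by (auto simp: c_def)
next
  fix \<phi> assume "\<phi> \<in> (\<lambda>c. walk_hom m n (\<lambda>i. int c + sgn w * i)) ` {0..<n}"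
  then obtain c where c: "\<phi> = walk_hom m n (\<lambda>i. int c + sgn w * i)" by blast
  have "sgn w * int m = w * int n" by (simp flip: assms(3) add: mult.assoc[symmetric] sgn_mult_abs)
  moreover have "\<bar>sgn w\<bar> \<le> 1" by (cases w rule: linorder_cases) auto
  ultimately have "walk m (w * int n) (\<lambda>i. int c + sgn w * i)"
    by (simp add: walk_def quasi_periodic_def algebra_simps)
  then show "\<phi> \<in> homs_w m n w" using c walk_hom_in_homs_w[OF _ assms(1)] by blast
qed

lemma card_homs_w_rigid:
  assumes "3 \<le> n" "0 < m" "\<bar>w\<bar> * int n = int m"
  shows "card (homs_w m n w) = n"
proof -
  let ?line = "\<lambda>c. walk_hom m n (\<lambda>i. int c + sgn w * i)"
  have at_0: "?line c 0 = c" if "c < n" for c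
    using assms(2) that by (simp add: walk_hom_def wrap_int)
  have "inj_on ?line {0..<n}"
  proof (rule inj_onI)
    fix c d assume c: "c \<in> {0..<n}" and d: "d \<in> {0..<n}" and eq: "?line c = ?line d"
    have "c = ?line c 0" using at_0 c by simp
    also have "\<dots> = ?line d 0" by (simp only: eq)
    also have "\<dots> = d" using at_0 d by simp
    finally show "c = d" .
  qed
  then have "card (?line ` {0..<n}) = n" by (simp add: card_image)
  then show ?thesis by (simp only: homs_w_rigid[OF assms])
qed

lemma linear_walk_homs_hom_arc_eq:
  assumes "4 \<le> n" "2 \<le> m" "\<bar>s\<bar> = 1" "c < n" "d < n"
    and arc: "hom_arc m n (walk_hom m n (\<lambda>i. int c + s * i)) (walk_hom m n (\<lambda>i. int d + s * i))"
  shows "c = d"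
proof -
  have n: "0 < n" using assms(1) by simp
  have near: "\<exists>e. \<bar>e\<bar> \<le> 1 \<and> int n dvd (int d - int c) + s * (int v - int u) - e"
    if "cyc_arc m u v" "u < m" "v < m" for u v
  proof -
    have "cyc_arc n (wrap n (int c + s * int u)) (wrap n (int d + s * int v))"
      using arc that by (simp add: hom_arc_def walk_hom_def)
    then show ?thesis by (simp add: cyc_arc_wrap_iff[OF n] algebra_simps)
  qed
  have "int n dvd int d - int c"
  proof (rule dvd_of_neighbours_near_zero)
    show "4 \<le> int n" using assms(1) by simp
    fix t :: int assume "\<bar>t\<bar> \<le> 1"
    moreover have "s = 1 \<or> s = -1" using assms(3) by arith
    ultimately have "t \<in> {s * (0 - 0), s * (1 - 0), s * (0 - 1)}" by (auto simp: abs_le_1_iff)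
    then show "\<exists>e. \<bar>e\<bar> \<le> 1 \<and> int n dvd int d - int c + t - e"
      using near[of 0 0] near[of 0 1] near[of 1 0] assms(2) by (auto simp: cyc_arc_def)
  qed
  then show "c = d" using assms(4,5) wrap_eq_iff[OF n, of "int d" "int c"] by (simp add: wrap_int)
qed

lemma homs_w_rigid_hom_arc_eq:
  assumes "4 \<le> n" "2 \<le> m" "\<bar>w\<bar> * int n = int m"
    and "\<phi> \<in> homs_w m n w" "\<psi> \<in> homs_w m n w" "hom_arc m n \<phi> \<psi>"
  shows "\<phi> = \<psi>"
proof -
  have rigid: "homs_w m n w = (\<lambda>c. walk_hom m n (\<lambda>i. int c + sgn w * i)) ` {0..<n}"
    using homs_w_rigid assms(1-3) by simp
  have s: "\<bar>sgn w\<bar> = 1" using assms(2,3) by (auto simp: abs_sgn)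
  obtain c where c: "c < n" "\<phi> = walk_hom m n (\<lambda>i. int c + sgn w * i)"
    using assms(4) rigid by auto
  obtain d where d: "d < n" "\<psi> = walk_hom m n (\<lambda>i. int d + sgn w * i)"
    using assms(5) rigid by auto
  have "c = d"
    using linear_walk_homs_hom_arc_eq[OF assms(1,2) s c(1) d(1)] assms(6) c(2) d(2) by simp
  then show ?thesis using c(2) d(2) by simp
qed

lemma abs_of_int_compare_divide:
  assumes "0 < n"
  shows "\<bar>real_of_int w\<bar> < real m / real n \<longleftrightarrow> \<bar>w\<bar> * int n < int m"
    and "\<bar>real_of_int w\<bar> = real m / real n \<longleftrightarrow> \<bar>w\<bar> * int n = int m"
    and "real m / real n < \<bar>real_of_int w\<bar> \<longleftrightarrow> int m < \<bar>w\<bar> * int n"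
proof -
  have n: "0 < real n" using assms by simp
  have casts: "\<bar>real_of_int w\<bar> * real n = real_of_int (\<bar>w\<bar> * int n)"
    "real m = real_of_int (int m)" by simp_all
  show "\<bar>real_of_int w\<bar> < real m / real n \<longleftrightarrow> \<bar>w\<bar> * int n < int m"
    unfolding pos_less_divide_eq[OF n] casts of_int_less_iff ..
  show "\<bar>real_of_int w\<bar> = real m / real n \<longleftrightarrow> \<bar>w\<bar> * int n = int m"
    unfolding nonzero_eq_divide_eq[OF n[THEN less_imp_neq, symmetric]] casts of_int_eq_iff ..
  show "real m / real n < \<bar>real_of_int w\<bar> \<longleftrightarrow> int m < \<bar>w\<bar> * int n"
    unfolding pos_divide_less_eq[OF n] casts of_int_less_iff ..
qed

theorem fact1p1:
  fixes m n :: nat and w :: int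
  assumes "4 \<le> n" and "n \<le> m"
  shows "(\<bar>real_of_int w\<bar> < real m / real n \<longrightarrow>
            card (components (homs_w m n w) (hom_arc m n)) = 1)
       \<and> (0 < \<bar>real_of_int w\<bar> \<and> \<bar>real_of_int w\<bar> = real m / real n \<longrightarrow>
            card (homs_w m n w) = n \<and>
            (\<forall>\<phi>\<in>homs_w m n w. \<forall>\<psi>\<in>homs_w m n w.
               \<phi> \<noteq> \<psi> \<longrightarrow> \<not> hom_arc m n \<phi> \<psi>))
       \<and> (real m / real n < \<bar>real_of_int w\<bar> \<longrightarrow> homs_w m n w = {})"
proof -
  have n: "3 \<le> n" "0 < n" and m: "2 \<le> m" "0 < m" using assms by simp_all
  show ?thesis
    unfolding abs_of_int_compare_divide[OF n(2)]
  proof (intro conjI impI)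
    assume "\<bar>w\<bar> * int n < int m"
    with homs_w_nonempty[OF n(1) m(2)] homs_w_rtrancl[OF n(1) m(1)]
    show "card (components (homs_w m n w) (hom_arc m n)) = 1"
      by (intro card_components_eq_1) auto
  next
    assume "0 < \<bar>real_of_int w\<bar> \<and> \<bar>w\<bar> * int n = int m"
    then show "card (homs_w m n w) = n" by (intro card_homs_w_rigid[OF n(1) m(2)]) simp
  next
    assume "0 < \<bar>real_of_int w\<bar> \<and> \<bar>w\<bar> * int n = int m"
    with homs_w_rigid_hom_arc_eq[OF assms(1) m(1)]
    show "\<forall>\<phi>\<in>homs_w m n w. \<forall>\<psi>\<in>homs_w m n w. \<phi> \<noteq> \<psi> \<longrightarrow> \<not> hom_arc m n \<phi> \<psi>"
      by blast
  next
    assume "int m < \<bar>w\<bar> * int n"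
    then show "homs_w m n w = {}" by (rule homs_w_empty[OF n(2)])
  qed
qed

end
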